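(* Let $(\Omega,\mathcal F,\mathbb P)$ be nonatomic, $X$ a bounded random vector in $\mathbb R^N$ with $\mathbb E(X)=0$, and $Y$ a bounded real random variable. Then the value of $$\sup\{\mathbb E(VY):\ \mathrm{Law}(V)=\mathrm{uniform}([0,1]),\ \mathbb E(X\mid V)=0\}$$ coincides with the value of $$\sup\Big\{\mathbb E\Big(\int_0^1U_tY\,dt\Big):\ t\mapsto U_t\text{ nonincreasing},\ U_t\in\{0,1\},\ \mathbb E(U_t)=1-t,\ \mathbb E(U_tX)=0\ \text{for all }t\in[0,1]\Big\},$$ where the second supremum is over jointly measurable families $(U_t)_{t\in[0,1]}$ of random variables. *)

theory Defs
  imports "HOL-Probability.Probability"
begin

definition nonatomic :: "'a measure \<Rightarrow> bool" where
  "nonatomic M \<longleftrightarrow> (\<forall>A\<in>sets M. measure M A > 0 \<longrightarrow>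
      (\<exists>B\<in>sets M. B \<subseteq> A \<and> 0 < measure M B \<and> measure M B < measure M A))"

end

theory Submission
  imports Defs
begin

text \<open>The two suprema range over sets that correspond to each other with equal objective values.
A uniform \<open>V\<close> yields the decreasing indicator family \<open>U\<^sub>t = 1{t < V}\<close>, and a family
\<open>U\<close> yields back \<open>V = \<integral>\<^sub>0\<^sup>1 U\<^sub>t dt\<close>; in both cases \<open>\<integral>\<^sub>0\<^sup>1 U\<^sub>t Y dt = V Y\<close> almost surely.
For a family \<open>U\<close>, the event \<open>{V \<le> t}\<close> agrees almost surely with \<open>{U\<^sub>t = 0}\<close>, which has
probability \<open>t\<close>; so \<open>V\<close> is uniform, and \<open>E(X; V \<le> t) = E X - E(U\<^sub>t X) = 0\<close> for all \<open>t\<close>,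
which by a Dynkin argument gives \<open>E(X | V) = 0\<close>. Conversely \<open>E(U\<^sub>t X) = E(E(X | V); V > t) = 0\<close>.\<close>

lemma interval_integral_01_indicator_less:
  "(LBINT t=0..1. (if t < v then 1 else 0 :: real)) = max 0 (min v 1)"
proof -
  have "(LBINT t=0..1. (if t < v then 1 else 0 :: real)) = (LINT t:{0<..<1}|lborel. if t < v then 1 else 0)"
    by (subst interval_integral_Ioo) auto
  also have "\<dots> = integral\<^sup>L lborel (indicator {0<..<min v 1})"
    unfolding set_lebesgue_integral_def
    by (rule Bochner_Integration.integral_cong) (auto simp: indicator_def)
  finally show ?thesis by (cases "0 \<le> min v 1") auto
qed

lemma interval_integral_mono:
  fixes f g :: "real \<Rightarrow> real" and a b :: ereal
  assumes "a \<le> b" "interval_lebesgue_integrable lborel a b f" "interval_lebesgue_integrable lborel a b g"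
    and "\<And>t. a < t \<Longrightarrow> t < b \<Longrightarrow> f t \<le> g t"
  shows "(LBINT t=a..b. f t) \<le> (LBINT t=a..b. g t)"
  using assms
  by (auto simp: interval_lebesgue_integral_def interval_lebesgue_integrable_def einterval_iff
      intro!: set_integral_mono)

lemma interval_integrable_bounded:
  fixes f :: "real \<Rightarrow> real"
  assumes "a \<le> b" and "f \<in> borel_measurable (restrict_space lborel {a..b})"
    and "\<And>t. t \<in> {a..b} \<Longrightarrow> \<bar>f t\<bar> \<le> C"
  shows "interval_lebesgue_integrable lborel a b f"
proof -
  interpret finite_measure "restrict_space lborel {a..b}"
    by (rule finite_measureI) (simp add: space_restrict_space emeasure_restrict_space emeasure_lborel_Icc_eq)
  have "integrable (restrict_space lborel {a..b}) f"
    by (rule integrable_const_bound[where B=C]) (auto simp: space_restrict_space assms)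
  then have "set_integrable lborel {a..b} f"
    unfolding set_integrable_def by (subst integrable_restrict_space[symmetric]) auto
  then show ?thesis
    unfolding interval_lebesgue_integrable_def using \<open>a \<le> b\<close>
    by (auto intro: set_integrable_subset)
qed

lemma interval_integral_decreasing_indicator_bounds:
  fixes u :: "real \<Rightarrow> real"
  assumes meas: "u \<in> borel_measurable (restrict_space lborel {0..1})"
    and vals: "\<And>t. t \<in> {0..1} \<Longrightarrow> u t \<in> {0, 1}"
    and mono: "\<And>s t. s \<in> {0..1} \<Longrightarrow> t \<in> {0..1} \<Longrightarrow> s \<le> t \<Longrightarrow> u t \<le> u s"
  shows "0 \<le> (LBINT s=0..1. u s)" and "(LBINT s=0..1. u s) \<le> 1"
    and "t \<in> {0..1} \<Longrightarrow> u t = 1 \<Longrightarrow> t \<le> (LBINT s=0..1. u s)"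
    and "t \<in> {0..1} \<Longrightarrow> u t = 0 \<Longrightarrow> (LBINT s=0..1. u s) \<le> t"
proof -
  let ?step = "\<lambda>v s. if s < v then 1 else 0 :: real"
  \<comment> \<open>The bounds of \<open>LBINT s=0..1\<close> are the numerals \<open>0, 1 :: ereal\<close>, not \<open>ereal 0, ereal 1\<close>.\<close>
  have int_u: "interval_lebesgue_integrable lborel 0 1 u"
    using interval_integrable_bounded[OF _ meas, of 1, unfolded zero_ereal_def[symmetric] one_ereal_def[symmetric]] vals
    by force
  have int_step: "interval_lebesgue_integrable lborel 0 1 (?step v)" for v
    using interval_integrable_bounded[of 0 1 "?step v" 1, unfolded zero_ereal_def[symmetric] one_ereal_def[symmetric]]
    by (simp add: measurable_restrict_space1)
  have step_le: "v \<le> (LBINT s=0..1. u s)"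
    if "v \<in> {0..1}" "\<And>s. 0 < s \<Longrightarrow> s < 1 \<Longrightarrow> ?step v s \<le> u s" for v
  proof -
    have "v = (LBINT s=0..1. ?step v s)" using that interval_integral_01_indicator_less[of v] by simp
    also have "\<dots> \<le> (LBINT s=0..1. u s)"
      by (rule interval_integral_mono[OF _ int_step int_u]) (use that in auto)
    finally show ?thesis .
  qed
  have le_step: "(LBINT s=0..1. u s) \<le> v"
    if "v \<in> {0..1}" "\<And>s. 0 < s \<Longrightarrow> s < 1 \<Longrightarrow> u s \<le> ?step v s" for v
  proof -
    have "(LBINT s=0..1. u s) \<le> (LBINT s=0..1. ?step v s)"
      by (rule interval_integral_mono[OF _ int_u int_step]) (use that in auto)
    also have "\<dots> = v" using that interval_integral_01_indicator_less[of v] by simp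
    finally show ?thesis .
  qed
  have u01: "0 \<le> u s" "u s \<le> 1" if "0 < s" "s < 1" for s
    using vals[of s] that by auto
  show "0 \<le> (LBINT s=0..1. u s)"
    by (rule step_le) (auto simp: u01)
  show "(LBINT s=0..1. u s) \<le> 1"
    by (rule le_step) (auto simp: u01)
  show "t \<le> (LBINT s=0..1. u s)" if "t \<in> {0..1}" "u t = 1"
    by (rule step_le) (use that mono[of _ t] in \<open>auto simp: u01\<close>)
  show "(LBINT s=0..1. u s) \<le> t" if "t \<in> {0..1}" "u t = 0"
    by (rule le_step) (use that mono[of t] in \<open>auto simp: u01\<close>)
qed

lemma borel_measurable_interval_integral_parametric:
  fixes f :: "real \<Rightarrow> 'b \<Rightarrow> real"
  assumes "a \<le> b" and f: "(\<lambda>(t, x). f t x) \<in> borel_measurable (restrict_space lborel {a..b} \<Otimes>\<^sub>M N)"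
  shows "(\<lambda>x. LBINT t=a..b. f t x) \<in> borel_measurable N"
proof -
  interpret sigma_finite_measure "restrict_space lborel {a..b}"
    by (rule sigma_finite_measure_restrict_space) (auto intro: sigma_finite_lborel)
  have "(LBINT t=a..b. f t x) = (\<integral>t. indicator {a<..<b} t * f t x \<partial>restrict_space lborel {a..b})" for x
    using \<open>a \<le> b\<close>
    by (auto simp: interval_lebesgue_integral_le_eq set_lebesgue_integral_def integral_restrict_space
        indicator_def intro!: Bochner_Integration.integral_cong)
  moreover have "(\<lambda>(x, t). indicator {a<..<b} t * f t x)
      \<in> borel_measurable (N \<Otimes>\<^sub>M restrict_space lborel {a..b})"
  proof -
    have "(indicator {a<..<b} :: real \<Rightarrow> real) \<in> borel_measurable (restrict_space lborel {a..b})"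
      by (rule measurable_restrict_space1) simp
    moreover have "(\<lambda>(x, t). f t x) \<in> borel_measurable (N \<Otimes>\<^sub>M restrict_space lborel {a..b})"
      using measurable_compose[OF measurable_pair_swap' f] by (simp add: case_prod_beta)
    ultimately show ?thesis
      by (simp add: case_prod_beta)
  qed
  ultimately show ?thesis
    by (simp add: borel_measurable_lebesgue_integral)
qed

lemma integrable_vec_nth:
  fixes F :: "'a \<Rightarrow> real ^ 'n"
  shows "integrable M F \<Longrightarrow> integrable M (\<lambda>x. F x $ i)"
  using integrable_bounded_linear[OF bounded_linear_vec_nth] .

lemma integral_vec_nth:
  fixes F :: "'a \<Rightarrow> real ^ 'n"
  assumes "integrable M F"
  shows "(\<integral>x. F x \<partial>M) $ i = (\<integral>x. F x $ i \<partial>M)"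
  using integral_bounded_linear[OF bounded_linear_vec_nth assms, of i] by simp

lemma set_integral_vimage_eq_0_atMost:
  fixes V :: "'a \<Rightarrow> real" and f :: "'a \<Rightarrow> real"
  assumes V: "V \<in> borel_measurable M" and f: "integrable M f" and "(\<integral>x. f x \<partial>M) = 0"
    and atMost: "\<And>a. (LINT x:V -` {..a} \<inter> space M|M. f x) = 0"
    and B: "B \<in> sets borel"
  shows "(LINT x:V -` B \<inter> space M|M. f x) = 0"
proof -
  have sets_V: "V -` A \<inter> space M \<in> sets M" if "A \<in> sets borel" for A
    using measurable_sets[OF V that] .
  have int_V: "set_integrable M (V -` A \<inter> space M) f" if "A \<in> sets borel" for A
    unfolding set_integrable_def by (rule integrable_mult_indicator[OF sets_V[OF that] f])
  have "Int_stable (range (atMost :: real \<Rightarrow> real set))"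
    by (auto simp: Int_stable_def)
  moreover have "range (atMost :: real \<Rightarrow> real set) \<subseteq> Pow UNIV" by simp
  moreover have "B \<in> sigma_sets UNIV (range atMost)"
    using B by (simp add: borel_eq_atMost)
  ultimately show ?thesis
  proof (induction B rule: sigma_sets_induct_disjoint)
    case (basic A)
    then show ?case using atMost by auto
  next
    case empty
    then show ?case by (simp add: set_lebesgue_integral_def)
  next
    case (compl A)
    have A: "A \<in> sets borel" using compl(1) by (simp add: borel_eq_atMost)
    then have A': "UNIV - A \<in> sets borel" by (metis sets.compl_sets space_borel)
    let ?S = "V -` A \<inter> space M"
    have compl_S: "V -` (UNIV - A) \<inter> space M = space M - ?S" by auto
    have "(LINT x:?S|M. f x) + (LINT x:space M - ?S|M. f x) = (LINT x:?S \<union> (space M - ?S)|M. f x)"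
      by (rule set_integral_Un[symmetric]) (use int_V[OF A] int_V[OF A'] compl_S in auto)
    also have "?S \<union> (space M - ?S) = space M" by auto
    also have "(LINT x:space M|M. f x) = 0"
      using set_integral_space[OF f] \<open>(\<integral>x. f x \<partial>M) = 0\<close> by simp
    finally show ?case using compl(2) compl_S by simp
  next
    case (union A)
    have A: "A j \<in> sets borel" for j
      using union(2) by (auto simp: borel_eq_atMost)
    then have "(\<Union>j. A j) \<in> sets borel" by blast
    moreover have UN_V: "V -` (\<Union>j. A j) \<inter> space M = (\<Union>j. V -` A j \<inter> space M)" by auto
    ultimately have "set_integrable M (\<Union>j. V -` A j \<inter> space M) f"
      using int_V by metis
    then have "(LINT x:(\<Union>j. V -` A j \<inter> space M)|M. f x) = (\<Sum>j. LINT x:V -` A j \<inter> space M|M. f x)"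
      using union(1) sets_V A
      by (intro lebesgue_integral_countable_add) (auto simp: disjoint_family_on_def)
    then show ?case using union(3) UN_V by simp
  qed
qed

context finite_measure
begin

lemma finite_measure_subalgebra_vimage:
  assumes "V \<in> measurable M N"
  shows "finite_measure_subalgebra M (vimage_algebra (space M) V N)"
  by unfold_locales (use assms in \<open>auto simp: subalgebra_def sets_vimage_algebra2 measurable_space\<close>)

lemma real_cond_exp_vimage_eq_0_iff:
  assumes V: "V \<in> measurable M N" and f: "integrable M f"
  shows "(AE x in M. real_cond_exp M (vimage_algebra (space M) V N) f x = 0)
    \<longleftrightarrow> (\<forall>B\<in>sets N. (LINT x:V -` B \<inter> space M|M. f x) = 0)"
proof -
  interpret finite_measure_subalgebra M "vimage_algebra (space M) V N"
    by (rule finite_measure_subalgebra_vimage[OF V])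
  have sets_F: "sets (vimage_algebra (space M) V N) = {V -` B \<inter> space M |B. B \<in> sets N}"
    using V by (simp add: sets_vimage_algebra2 measurable_space Pi_iff)
  show ?thesis
  proof
    assume AE_0: "AE x in M. real_cond_exp M (vimage_algebra (space M) V N) f x = 0"
    show "\<forall>B\<in>sets N. (LINT x:V -` B \<inter> space M|M. f x) = 0"
    proof
      fix B assume "B \<in> sets N"
      then have "(LINT x:V -` B \<inter> space M|M. f x)
          = (LINT x:V -` B \<inter> space M|M. real_cond_exp M (vimage_algebra (space M) V N) f x)"
        by (intro real_cond_exp_intA[OF f] in_vimage_algebra)
      also have "\<dots> = 0"
        unfolding set_lebesgue_integral_def by (rule integral_eq_zero_AE) (use AE_0 in auto)
      finally show "(LINT x:V -` B \<inter> space M|M. f x) = 0" .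
    qed
  next
    assume "\<forall>B\<in>sets N. (LINT x:V -` B \<inter> space M|M. f x) = 0"
    then show "AE x in M. real_cond_exp M (vimage_algebra (space M) V N) f x = 0"
      using sets_F by (intro real_cond_exp_charact) (auto simp: f set_lebesgue_integral_def)
  qed
qed

end

locale decreasing_indicator_family = prob_space +
  fixes U :: "real \<Rightarrow> 'a \<Rightarrow> real"
  assumes measurable_family: "(\<lambda>(t, x). U t x) \<in> borel_measurable (restrict_space lborel {0..1} \<Otimes>\<^sub>M M)"
    and family_antimono: "\<And>x s t. x \<in> space M \<Longrightarrow> s \<in> {0..1} \<Longrightarrow> t \<in> {0..1} \<Longrightarrow> s \<le> t \<Longrightarrow> U t x \<le> U s x"
    and family_01: "\<And>t x. t \<in> {0..1} \<Longrightarrow> x \<in> space M \<Longrightarrow> U t x \<in> {0, 1}"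
    and expectation_family: "\<And>t. t \<in> {0..1} \<Longrightarrow> expectation (U t) = 1 - t"
begin

definition threshold :: "'a \<Rightarrow> real" where
  "threshold x = (LBINT t=0..1. U t x)"

lemma borel_measurable_family:
  "t \<in> {0..1} \<Longrightarrow> U t \<in> borel_measurable M"
  using measurable_compose[OF measurable_Pair1' measurable_family, of t] by simp

lemma sets_family_eq_0:
  assumes "t \<in> {0..1}"
  shows "{x \<in> space M. U t x = 0} \<in> events"
proof -
  have [measurable]: "U t \<in> borel_measurable M" using borel_measurable_family[OF assms] .
  show ?thesis by measurable
qed

lemma borel_measurable_threshold [measurable]: "threshold \<in> borel_measurable M"
  using borel_measurable_interval_integral_parametric[where a=0 and b=1, OF _ measurable_family]
  by (simp add: threshold_def[abs_def] zero_ereal_def one_ereal_def)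

lemma threshold_bounds:
  assumes x: "x \<in> space M"
  shows "0 \<le> threshold x" and "threshold x \<le> 1"
    and "t \<in> {0..1} \<Longrightarrow> U t x = 1 \<Longrightarrow> t \<le> threshold x"
    and "t \<in> {0..1} \<Longrightarrow> U t x = 0 \<Longrightarrow> threshold x \<le> t"
proof -
  have "(\<lambda>t. U t x) \<in> borel_measurable (restrict_space lborel {0..1})"
    using measurable_compose[OF measurable_Pair2' measurable_family, of x] x by simp
  note bounds = interval_integral_decreasing_indicator_bounds[OF this family_01[OF _ x] family_antimono[OF x]]
  show "0 \<le> threshold x" "threshold x \<le> 1"
    "t \<in> {0..1} \<Longrightarrow> U t x = 1 \<Longrightarrow> t \<le> threshold x"
    "t \<in> {0..1} \<Longrightarrow> U t x = 0 \<Longrightarrow> threshold x \<le> t"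
    unfolding threshold_def using bounds by auto
qed

lemma integrable_family_scaleR:
  fixes f :: "'a \<Rightarrow> 'b::{banach, second_countable_topology}"
  assumes "t \<in> {0..1}" and "integrable M f"
  shows "integrable M (\<lambda>x. U t x *\<^sub>R f x)"
proof (rule Bochner_Integration.integrable_bound[OF assms(2)])
  have [measurable]: "U t \<in> borel_measurable M" "f \<in> borel_measurable M"
    using assms by (auto simp: borel_measurable_family borel_measurable_integrable)
  show "(\<lambda>x. U t x *\<^sub>R f x) \<in> borel_measurable M" by measurable
qed (auto intro!: AE_I2 dest: family_01[OF assms(1)])

lemma prob_family_eq_0:
  assumes t: "t \<in> {0..1}"
  shows "prob {x \<in> space M. U t x = 0} = t"
proof -
  let ?Z = "{x \<in> space M. U t x = 0}"
  have Z: "?Z \<in> events" using sets_family_eq_0[OF t] .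
  have "1 - t = expectation (U t)" using expectation_family[OF t] by simp
  also have "\<dots> = expectation (indicator (space M - ?Z))"
    by (rule Bochner_Integration.integral_cong) (use family_01 t in \<open>auto simp: indicator_def\<close>)
  also have "\<dots> = 1 - prob ?Z"
    using prob_compl[OF Z] by (simp add: Int_absorb2)
  finally show ?thesis by simp
qed

lemma prob_threshold_le:
  assumes t: "0 \<le> t" "t < 1"
  shows "prob (threshold -` {..t} \<inter> space M) = t"
proof (rule antisym)
  have "{x \<in> space M. U t x = 0} \<subseteq> threshold -` {..t} \<inter> space M"
    using threshold_bounds(4) t by auto
  then have "prob {x \<in> space M. U t x = 0} \<le> prob (threshold -` {..t} \<inter> space M)"
    by (intro finite_measure_mono) measurable
  then show "t \<le> prob (threshold -` {..t} \<inter> space M)"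
    using prob_family_eq_0[of t] t by simp
  show "prob (threshold -` {..t} \<inter> space M) \<le> t"
  proof (rule dense_ge_bounded[OF t(2)])
    fix s assume s: "t < s" "s < 1"
    have "threshold -` {..t} \<inter> space M \<subseteq> {x \<in> space M. U s x = 0}"
      using threshold_bounds(3)[of _ s] family_01[of s] s t by fastforce
    then have "prob (threshold -` {..t} \<inter> space M) \<le> prob {x \<in> space M. U s x = 0}"
      using sets_family_eq_0[of s] s t by (intro finite_measure_mono) auto
    then show "prob (threshold -` {..t} \<inter> space M) \<le> s" using prob_family_eq_0[of s] s t by simp
  qed
qed

lemma AE_threshold_le_iff:
  assumes t: "0 \<le> t" "t < 1"
  shows "AE x in M. threshold x \<le> t \<longleftrightarrow> U t x = 0"
proof -
  let ?S = "threshold -` {..t} \<inter> space M" and ?Z = "{x \<in> space M. U t x = 0}"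
  have S: "?S \<in> events" by measurable
  have Z: "?Z \<in> events" using sets_family_eq_0[of t] t by simp
  have Z_S: "?Z \<subseteq> ?S" using threshold_bounds(4) t by auto
  have "prob (?S - ?Z) = 0"
    using finite_measure_Diff[OF S Z Z_S] prob_threshold_le[OF t] prob_family_eq_0[of t] t by simp
  then have "AE x in M. x \<notin> ?S - ?Z"
    using S Z by (intro AE_not_in) (simp add: null_sets_def emeasure_eq_measure)
  then show ?thesis using Z_S by auto
qed

lemma distr_threshold: "distr M borel threshold = uniform_measure lborel {0..1}"
proof (rule cdf_unique)
  show "real_distribution (distr M borel threshold)" by simp
  show "real_distribution (uniform_measure lborel {0..1::real})"
    by (auto simp: real_distribution_def real_distribution_axioms_def intro!: prob_space_uniform_measure)
  show "cdf (distr M borel threshold) = cdf (uniform_measure lborel {0..1})"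
  proof
    fix t :: real
    have "cdf (distr M borel threshold) t = prob (threshold -` {..t} \<inter> space M)"
      unfolding cdf_def by (rule measure_distr) auto
    also have "\<dots> = measure lborel ({..t} \<inter> {0..1})"
    proof -
      consider "t < 0" | "0 \<le> t" "t < 1" | "1 \<le> t" by linarith
      then show ?thesis
      proof cases
        case 1
        then have "threshold -` {..t} \<inter> space M = {}" using threshold_bounds(1) by force
        then show ?thesis using 1 by simp
      next
        case 2
        then have "{..t} \<inter> {0..1} = {0..t}" by auto
        then show ?thesis using prob_threshold_le 2 by simp
      next
        case 3
        then have "threshold -` {..t} \<inter> space M = space M" using threshold_bounds(2) by force
        moreover have "{..t} \<inter> {0..1} = {0..1}" using 3 by auto
        ultimately show ?thesis by (simp add: prob_space)
      qed
    qed
    also have "\<dots> = cdf (uniform_measure lborel {0..1}) t"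
      by (simp add: cdf_def measure_def Int_commute divide_ennreal_def)
    finally show "cdf (distr M borel threshold) t = cdf (uniform_measure lborel {0..1}) t" .
  qed
qed

lemma set_integral_threshold_atMost:
  fixes f :: "'a \<Rightarrow> real"
  assumes f: "integrable M f" "expectation f = 0"
    and orth: "\<And>t. t \<in> {0..1} \<Longrightarrow> expectation (\<lambda>x. U t x * f x) = 0"
  shows "(LINT x:threshold -` {..t} \<inter> space M|M. f x) = 0"
proof -
  consider "t < 0" | "0 \<le> t" "t < 1" | "1 \<le> t" by linarith
  then show ?thesis
  proof cases
    case 1
    then have "threshold -` {..t} \<inter> space M = {}" using threshold_bounds(1) by force
    then show ?thesis by (simp add: set_lebesgue_integral_def)
  next
    case 2
    let ?Z = "{x \<in> space M. U t x = 0}"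
    have [measurable]: "f \<in> borel_measurable M" "U t \<in> borel_measurable M"
      using f 2 by (auto simp: borel_measurable_family borel_measurable_integrable)
    have "(LINT x:threshold -` {..t} \<inter> space M|M. f x) = (LINT x:?Z|M. f x)"
      by (rule set_integral_cong_set) (use AE_threshold_le_iff[OF 2] in \<open>auto simp: set_borel_measurable_def\<close>)
    also have "\<dots> = expectation (\<lambda>x. f x - U t x * f x)"
      unfolding set_lebesgue_integral_def
      by (rule Bochner_Integration.integral_cong) (use family_01[of t] 2 in \<open>auto simp: indicator_def\<close>)
    also have "\<dots> = 0"
      using integrable_family_scaleR[of t f] f orth[of t] 2 by simp
    finally show ?thesis .
  next
    case 3
    then have "threshold -` {..t} \<inter> space M = space M" using threshold_bounds(2) by force
    then show ?thesis using set_integral_space[OF f(1)] f(2) by simp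
  qed
qed

lemma real_cond_exp_threshold_eq_0:
  fixes f :: "'a \<Rightarrow> real"
  assumes f: "integrable M f" "expectation f = 0"
    and orth: "\<And>t. t \<in> {0..1} \<Longrightarrow> expectation (\<lambda>x. U t x * f x) = 0"
  shows "AE x in M. real_cond_exp M (vimage_algebra (space M) threshold borel) f x = 0"
  using set_integral_vimage_eq_0_atMost[OF borel_measurable_threshold f set_integral_threshold_atMost[OF f orth]]
  by (simp add: real_cond_exp_vimage_eq_0_iff[OF borel_measurable_threshold f(1)])

lemma real_cond_exp_threshold_component_eq_0:
  fixes X :: "'a \<Rightarrow> real ^ 'n"
  assumes X: "integrable M X" "expectation X = 0"
    and orth: "\<And>t. t \<in> {0..1} \<Longrightarrow> expectation (\<lambda>x. U t x *\<^sub>R X x) = 0"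
  shows "AE x in M. real_cond_exp M (vimage_algebra (space M) threshold borel) (\<lambda>x. X x $ i) x = 0"
proof (rule real_cond_exp_threshold_eq_0)
  show "integrable M (\<lambda>x. X x $ i)" by (rule integrable_vec_nth[OF X(1)])
  show "expectation (\<lambda>x. X x $ i) = 0"
    using integral_vec_nth[OF X(1)] X(2) by simp
  show "expectation (\<lambda>x. U t x * X x $ i) = 0" if "t \<in> {0..1}" for t
    using integral_vec_nth[OF integrable_family_scaleR[OF that X(1)]] orth[OF that] by simp
qed

end

lemma integral_interval_integral_indicator_less:
  fixes V Y :: "'a \<Rightarrow> real"
  assumes [measurable]: "V \<in> borel_measurable M" "Y \<in> borel_measurable M"
    and "AE x in M. V x \<in> {0..1}"
  shows "(\<integral>x. (LBINT t=0..1. (if t < V x then 1 else 0) * Y x) \<partial>M) = (\<integral>x. V x * Y x \<partial>M)"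
  using assms by (intro integral_cong_AE) (auto simp: interval_integral_01_indicator_less)

context prob_space
begin

lemma prob_vimage_uniform:
  fixes V :: "'a \<Rightarrow> real"
  assumes V: "V \<in> borel_measurable M" and distr_V: "distr M borel V = uniform_measure lborel {0..1}"
    and A: "A \<in> sets borel"
  shows "prob (V -` A \<inter> space M) = measure lborel (A \<inter> {0..1})"
proof -
  have "prob (V -` A \<inter> space M) = measure (uniform_measure lborel {0..1::real}) A"
    using measure_distr[OF V A] distr_V by simp
  also have "\<dots> = measure lborel (A \<inter> {0..1})"
    using A by (simp add: measure_def Int_commute divide_ennreal_def)
  finally show ?thesis .
qed

lemma AE_uniform_in_01:
  fixes V :: "'a \<Rightarrow> real"
  assumes V: "V \<in> borel_measurable M" and distr_V: "distr M borel V = uniform_measure lborel {0..1}"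
  shows "AE x in M. V x \<in> {0..1}"
proof -
  have "prob (V -` {0..1} \<inter> space M) = 1"
    using prob_vimage_uniform[OF V distr_V, of "{0..1}"] by simp
  then have "AE x in M. x \<in> V -` {0..1} \<inter> space M"
    using V by (subst AE_in_set_eq_1) auto
  then show ?thesis by auto
qed

lemma expectation_indicator_greater_uniform:
  fixes V :: "'a \<Rightarrow> real"
  assumes V: "V \<in> borel_measurable M" and distr_V: "distr M borel V = uniform_measure lborel {0..1}"
    and t: "t \<in> {0..1}"
  shows "expectation (\<lambda>x. if t < V x then 1 else 0) = 1 - t"
proof -
  have "expectation (\<lambda>x. if t < V x then 1 else 0) = expectation (indicator (V -` {t<..} \<inter> space M))"
    by (rule Bochner_Integration.integral_cong) (auto simp: indicator_def)
  also have "\<dots> = prob (V -` {t<..} \<inter> space M)" by simp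
  also have "\<dots> = measure lborel ({t<..} \<inter> {0..1})"
    using prob_vimage_uniform[OF V distr_V, of "{t<..}"] by simp
  also have "{t<..} \<inter> {0..1} = {t<..1}" using t by auto
  finally show ?thesis using t by simp
qed

lemma decreasing_indicator_family_indicator_less:
  fixes V :: "'a \<Rightarrow> real"
  assumes V [measurable]: "V \<in> borel_measurable M"
    and distr_V: "distr M borel V = uniform_measure lborel {0..1}"
  shows "decreasing_indicator_family M (\<lambda>t x. if t < V x then 1 else 0)"
proof unfold_locales
  have [measurable]: "fst \<in> measurable (restrict_space lborel {0..1} \<Otimes>\<^sub>M M) borel"
    by (rule measurable_compose[OF measurable_fst measurable_restrict_space1]) simp
  show "(\<lambda>(t, x). if t < V x then 1 else 0 :: real) \<in> borel_measurable (restrict_space lborel {0..1} \<Otimes>\<^sub>M M)"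
    by measurable
qed (auto simp: expectation_indicator_greater_uniform[OF V distr_V])

lemma expectation_indicator_greater_scaleR_eq_0:
  fixes V :: "'a \<Rightarrow> real" and X :: "'a \<Rightarrow> real ^ 'n"
  assumes V: "V \<in> borel_measurable M" and X: "integrable M X"
    and cond_exp_X: "\<And>i. AE x in M. real_cond_exp M (vimage_algebra (space M) V borel) (\<lambda>x. X x $ i) x = 0"
  shows "expectation (\<lambda>x. (if t < V x then 1 else 0) *\<^sub>R X x) = 0"
proof -
  let ?S = "V -` {t<..} \<inter> space M"
  have S: "?S \<in> sets M" using measurable_sets[OF V] by simp
  have "(LINT x:?S|M. X x) $ i = 0" for i
  proof -
    have "(LINT x:?S|M. X x) $ i = (LINT x:?S|M. X x $ i)"
      unfolding set_lebesgue_integral_def using integral_vec_nth[OF integrable_mult_indicator[OF S X]] by simp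
    also have "\<dots> = 0"
      using cond_exp_X real_cond_exp_vimage_eq_0_iff[OF V integrable_vec_nth[OF X]] by simp
    finally show ?thesis .
  qed
  moreover have "expectation (\<lambda>x. (if t < V x then 1 else 0) *\<^sub>R X x) = (LINT x:?S|M. X x)"
    unfolding set_lebesgue_integral_def by (rule Bochner_Integration.integral_cong) (auto simp: indicator_def)
  ultimately show ?thesis by (simp add: vec_eq_iff)
qed

end

theorem mainTheorem10:
  fixes M :: "'a measure" and X :: "'a \<Rightarrow> real ^ 'n" and Y :: "'a \<Rightarrow> real"
  assumes "prob_space M"
    and "nonatomic M"
    and "X \<in> borel_measurable M" and "\<exists>C. \<forall>\<omega>\<in>space M. norm (X \<omega>) \<le> C"
    and "prob_space.expectation M X = 0"
    and "Y \<in> borel_measurable M" and "\<exists>C. \<forall>\<omega>\<in>space M. \<bar>Y \<omega>\<bar> \<le> C"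
  shows
    "(SUP V \<in> {V. V \<in> borel_measurable M
                  \<and> distr M borel V = uniform_measure lborel {0..1}
                  \<and> (\<forall>i. AE \<omega> in M.
                        real_cond_exp M (vimage_algebra (space M) V borel) (\<lambda>\<omega>. X \<omega> $ i) \<omega> = 0)}.
        ereal (prob_space.expectation M (\<lambda>\<omega>. V \<omega> * Y \<omega>)))
   = (SUP U \<in> {U :: real \<Rightarrow> 'a \<Rightarrow> real.
                  (\<lambda>(t, \<omega>). U t \<omega>) \<in> borel_measurable (restrict_space lborel {0..1} \<Otimes>\<^sub>M M)
                  \<and> (\<forall>\<omega>\<in>space M. \<forall>s\<in>{0..1}. \<forall>t\<in>{0..1}. s \<le> t \<longrightarrow> U t \<omega> \<le> U s \<omega>)
                  \<and> (\<forall>t\<in>{0..1}. \<forall>\<omega>\<in>space M. U t \<omega> \<in> {0, 1})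
                  \<and> (\<forall>t\<in>{0..1}. prob_space.expectation M (U t) = 1 - t)
                  \<and> (\<forall>t\<in>{0..1}. prob_space.expectation M (\<lambda>\<omega>. U t \<omega> *\<^sub>R X \<omega>) = 0)}.
        ereal (prob_space.expectation M (\<lambda>\<omega>. LBINT t=0..1. U t \<omega> * Y \<omega>)))"
proof -
  interpret prob_space M by fact
  have X: "integrable M X"
    using assms(3,4) by (auto intro: integrable_const_bound)
  show ?thesis
  proof (rule SUP_eq, goal_cases)
    case (1 V)
    then have V: "V \<in> borel_measurable M" "distr M borel V = uniform_measure lborel {0..1}" by auto
    interpret indicators: decreasing_indicator_family M "\<lambda>t x. if t < V x then 1 else 0"
      by (rule decreasing_indicator_family_indicator_less[OF V])
    show ?case
      using 1 indicators.measurable_family indicators.family_antimono indicators.family_01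
        indicators.expectation_family expectation_indicator_greater_scaleR_eq_0[OF V(1) X]
        integral_interval_integral_indicator_less[OF V(1) assms(6) AE_uniform_in_01[OF V]]
      by (intro bexI[where x="\<lambda>t x. if t < V x then 1 else 0"]) auto
  next
    case (2 U)
    interpret decreasing_indicator_family M U
      using 2 by unfold_locales auto
    show ?case
      using 2 distr_threshold real_cond_exp_threshold_component_eq_0[OF X assms(5)]
      by (intro bexI[where x=threshold]) (auto simp: threshold_def)
  qed
qed

end
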